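(* Let $\sigma:\mathbb{Z}'\to[0,1]$ with $\sum_{l\in\mathbb{Z}',\,l<0}\sigma(l)<\infty$, and let $s\in\mathbb{Z}'$ be such that $Q^0_\sigma(s):=\prod_{i=1}^{\infty}\bigl(1-\sigma(-i-s)\bigr)>0$. Then there exist $L_*=L_*(s)>0$ and $c=c(s)>0$ such that $\|\mathsf D\|\le cL$ for $0\le L<L_*$, where $\|\mathsf D\|$ is the operator norm of $\mathsf D$ (depending on $L$).
   Context: $\mathbb{Z}'=\mathbb{Z}+\tfrac12$, $\mathbb{Z}'_+=\mathbb{Z}'\cap(0,\infty)$; $\mathrm{J}_k$ is the Bessel function of the first kind. For $L\ge0$ let $K^{\mathsf{Be}}(a,a)=\sum_{l\in\mathbb{Z}'_+}\mathrm{J}_{a+l}(2L)^2$ and $M_s(a,a)=\sigma(a-s-\tfrac12)K^{\mathsf{Be}}(a,a)$. Let $\widehat{\mathbf f}(a)=\sigma(a-s-\tfrac12)\,(\mathrm{J}_{a-\frac12}(2L),\,L\mathrm{J}_{a+\frac12}(2L))^\top$ and $\widehat{\mathbf g}(a)=\frac{1}{1-M_s(a,a)}(L\mathrm{J}_{a+\frac12}(2L),\,-\mathrm{J}_{a-\frac12}(2L))^\top$. The operator $\mathsf D$ on $\ell^2(\mathbb{Z}')\otimes\mathbb{C}^2$ is $(\mathsf D\mathbf r)(a)=\sum_{b\in\mathbb{Z}'\setminus\{a\}}\frac{\mathbf r(b)\,\widehat{\mathbf g}(b)^\top\widehat{\mathbf f}(a)}{a-b}$, $a\in\mathbb{Z}'$;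 the norm on $\ell^2(\mathbb{Z}')\otimes\mathbb{C}^2$ is induced by the standard norm on $\ell^2(\mathbb{Z}')$ and the Euclidean norm on $\mathbb{C}^2$. *)

theory Defs
  imports "HOL-Analysis.Analysis"
begin

definition Zp :: "real set" where
  "Zp = {x. \<exists>k::int. x = real_of_int k + 1/2}"

definition Zp_pos :: "real set" where
  "Zp_pos = {x \<in> Zp. x > 0}"

definition besselJ_int :: "int \<Rightarrow> real \<Rightarrow> real" where
  "besselJ_int n x =
     (if n \<ge> 0 then (\<Sum>m. (-1)^m / (fact m * fact (m + nat n)) * (x/2)^(2*m + nat n))
      else (-1)^(nat (-n)) *
        (\<Sum>m. (-1)^m / (fact m * fact (m + nat (-n))) * (x/2)^(2*m + nat (-n))))"

text \<open>J_nu(x) for a real order nu; only ever applied to integer orders nu (where floor nu = nu).\<close>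
definition BesselJ :: "real \<Rightarrow> real \<Rightarrow> real" where
  "BesselJ nu x = besselJ_int \<lfloor>nu\<rfloor> x"

definition Kbe :: "real \<Rightarrow> real \<Rightarrow> real" where
  "Kbe L a = (\<Sum>\<^sub>\<infinity>l\<in>Zp_pos. (BesselJ (a + l) (2*L))^2)"

definition Ms :: "(real \<Rightarrow> real) \<Rightarrow> real \<Rightarrow> real \<Rightarrow> real \<Rightarrow> real" where
  "Ms \<sigma> s L a = \<sigma> (a - s - 1/2) * Kbe L a"

text \<open>Components of the vectors f-hat(a) and g-hat(a) in C^2 (they are real).\<close>
definition fhat1 :: "(real \<Rightarrow> real) \<Rightarrow> real \<Rightarrow> real \<Rightarrow> real \<Rightarrow> real" where
  "fhat1 \<sigma> s L a = \<sigma> (a - s - 1/2) * BesselJ (a - 1/2) (2*L)"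
definition fhat2 :: "(real \<Rightarrow> real) \<Rightarrow> real \<Rightarrow> real \<Rightarrow> real \<Rightarrow> real" where
  "fhat2 \<sigma> s L a = \<sigma> (a - s - 1/2) * (L * BesselJ (a + 1/2) (2*L))"
definition ghat1 :: "(real \<Rightarrow> real) \<Rightarrow> real \<Rightarrow> real \<Rightarrow> real \<Rightarrow> real" where
  "ghat1 \<sigma> s L b = (L * BesselJ (b + 1/2) (2*L)) / (1 - Ms \<sigma> s L b)"
definition ghat2 :: "(real \<Rightarrow> real) \<Rightarrow> real \<Rightarrow> real \<Rightarrow> real \<Rightarrow> real" where
  "ghat2 \<sigma> s L b = (- BesselJ (b - 1/2) (2*L)) / (1 - Ms \<sigma> s L b)"

definition Dker :: "(real \<Rightarrow> real) \<Rightarrow> real \<Rightarrow> real \<Rightarrow> real \<Rightarrow> real \<Rightarrow> real" where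
  "Dker \<sigma> s L a b =
     (ghat1 \<sigma> s L b * fhat1 \<sigma> s L a + ghat2 \<sigma> s L b * fhat2 \<sigma> s L a) / (a - b)"

text \<open>Elements of l^2(Z') (x) C^2 are modelled as functions r :: real => complex * complex,
  of which only the values on Z' matter; the norm on complex * complex is the Euclidean one.\<close>
definition l2Zp :: "(real \<Rightarrow> complex \<times> complex) \<Rightarrow> bool" where
  "l2Zp r \<longleftrightarrow> (\<lambda>b. (norm (r b))^2) summable_on Zp"

definition l2norm :: "(real \<Rightarrow> complex \<times> complex) \<Rightarrow> real" where
  "l2norm r = sqrt (\<Sum>\<^sub>\<infinity>b\<in>Zp. (norm (r b))^2)"

definition Dop :: "(real \<Rightarrow> real) \<Rightarrow> real \<Rightarrow> real \<Rightarrow> (real \<Rightarrow> complex \<times> complex) \<Rightarrow> real \<Rightarrow> complex \<times> complex" where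
  "Dop \<sigma> s L r a = (\<Sum>\<^sub>\<infinity>b\<in>Zp - {a}. Dker \<sigma> s L a b *\<^sub>R r b)"

end

theory Submission
  imports Defs
begin

text \<open>
  For \<open>0 \<le> L < 1\<close> the power series of \<open>J\<^sub>n(2L)\<close> is dominated by
  \<open>L\<^bsup>|n|\<^esup> / (1 - L\<^sup>2)\<close>, so \<open>K\<^sup>B\<^sup>e(a,a) \<le> (1 + L\<^sup>2) / (1 - L\<^sup>2)\<^sup>3\<close> for all \<open>a\<close>
  and \<open>K\<^sup>B\<^sup>e(a,a) = O(L\<^sup>2)\<close> for \<open>a > 0\<close>. For \<open>a < 0\<close> the factor \<open>\<sigma>(a - s - 1/2)\<close> runs
  through the values \<open>\<sigma>(-i - s)\<close>, which are summable and, since \<open>Q\<^sup>0\<^sub>\<sigma>(s) > 0\<close>, all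
  different from 1; hence they are bounded by some \<open>q < 1\<close>. So for small \<open>L\<close> all
  denominators \<open>1 - M\<^sub>s(a,a)\<close> are at least \<open>\<delta> = (1 - q)/2\<close>.

  Each of the two products in \<open>g(b)\<^sup>T f(a)\<close> carries exactly one factor \<open>L\<close>, and for
  \<open>L \<le> 1/2\<close> the Bessel factors decay like \<open>w(a) = 2\<^bsup>-\<lfloor>|a|\<rfloor>\<^esup>\<close>. With \<open>|a - b| \<ge> 1\<close>
  this bounds the kernel of \<open>D\<close> by \<open>(4L/\<delta>) w(a) w(b)\<close>, and by Cauchy-Schwarz an
  operator with such a kernel has norm at most \<open>(4L/\<delta>) \<Sum> w\<^sup>2\<close>.
\<close>

section \<open>The half-integer lattice\<close>

lemma Zp_pos_eq: "Zp_pos = range (\<lambda>n::nat. real n + 1/2)"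
proof -
  have "x \<in> Zp_pos \<longleftrightarrow> x \<in> range (\<lambda>n::nat. real n + 1/2)" for x
  proof
    assume "x \<in> Zp_pos"
    then obtain k :: int where k: "x = of_int k + 1/2" "x > 0"
      unfolding Zp_pos_def Zp_def by auto
    then have "x = real (nat k) + 1/2" by simp
    then show "x \<in> range (\<lambda>n::nat. real n + 1/2)" by blast
  next
    assume "x \<in> range (\<lambda>n::nat. real n + 1/2)"
    then show "x \<in> Zp_pos" unfolding Zp_pos_def Zp_def
      by (auto intro!: exI[of _ "int n" for n])
  qed
  then show ?thesis by blast
qed

lemma Zp_abs_diff_ge_1:
  assumes "a \<in> Zp" "b \<in> Zp" "a \<noteq> b"
  shows "1 \<le> \<bar>a - b\<bar>"
proof -
  obtain k j :: int where "a = of_int k + 1/2" "b = of_int j + 1/2"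
    using assms(1,2) unfolding Zp_def by auto
  with assms(3) have "a - b = of_int (k - j)" "k \<noteq> j" by auto
  then show ?thesis by linarith
qed

lemma Zp_diff_minus_half:
  assumes "a \<in> Zp" "s \<in> Zp"
  shows "a - s - 1/2 \<in> Zp"
proof -
  obtain k j :: int where "a = of_int k + 1/2" "s = of_int j + 1/2"
    using assms unfolding Zp_def by auto
  then have "a - s - 1/2 = of_int (k - j - 1) + 1/2" by simp
  then show ?thesis unfolding Zp_def by blast
qed

lemma Zp_minus_real:
  assumes "s \<in> Zp"
  shows "- real n - s \<in> Zp"
proof -
  obtain j :: int where "s = of_int j + 1/2"
    using assms unfolding Zp_def by auto
  then have "- real n - s = of_int (- int n - j - 1) + 1/2" by simp
  then show ?thesis unfolding Zp_def by blast
qed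

section \<open>Operators with a separable kernel bound\<close>

lemma
  fixes f g :: "'a \<Rightarrow> real"
  assumes f_ge: "\<And>x. x \<in> A \<Longrightarrow> 0 \<le> f x" and g_ge: "\<And>x. x \<in> A \<Longrightarrow> 0 \<le> g x"
    and f_summable: "(\<lambda>x. (f x)\<^sup>2) summable_on A" and g_summable: "(\<lambda>x. (g x)\<^sup>2) summable_on A"
  shows summable_on_mult_of_square_summable: "(\<lambda>x. f x * g x) summable_on A"
    and infsum_mult_le_sqrt: "(\<Sum>\<^sub>\<infinity>x\<in>A. f x * g x) \<le> sqrt (\<Sum>\<^sub>\<infinity>x\<in>A. (f x)\<^sup>2) * sqrt (\<Sum>\<^sub>\<infinity>x\<in>A. (g x)\<^sup>2)"
proof -
  show summable: "(\<lambda>x. f x * g x) summable_on A"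
  proof (rule summable_on_comparison_test[OF summable_on_add[OF f_summable g_summable]])
    fix x assume "x \<in> A"
    then show "0 \<le> f x * g x"
      using f_ge g_ge by simp
    then show "f x * g x \<le> (f x)\<^sup>2 + (g x)\<^sup>2"
      using sum_squares_bound[of "f x" "g x"] by simp
  qed
  show "(\<Sum>\<^sub>\<infinity>x\<in>A. f x * g x) \<le> sqrt (\<Sum>\<^sub>\<infinity>x\<in>A. (f x)\<^sup>2) * sqrt (\<Sum>\<^sub>\<infinity>x\<in>A. (g x)\<^sup>2)"
  proof (rule infsum_le_finite_sums[OF summable])
    fix F assume F: "finite F" "F \<subseteq> A"
    have "(\<Sum>x\<in>F. f x * g x) \<le> L2_set f F * L2_set g F"
      using L2_set_mult_ineq[of f g F] F f_ge g_ge by (simp add: subset_iff)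
    also have "\<dots> \<le> sqrt (\<Sum>\<^sub>\<infinity>x\<in>A. (f x)\<^sup>2) * sqrt (\<Sum>\<^sub>\<infinity>x\<in>A. (g x)\<^sup>2)"
      unfolding L2_set_def using F
      by (intro mult_mono real_sqrt_le_mono finite_sum_le_infsum f_summable g_summable)
        (auto intro: infsum_nonneg sum_nonneg)
    finally show "(\<Sum>x\<in>F. f x * g x) \<le> sqrt (\<Sum>\<^sub>\<infinity>x\<in>A. (f x)\<^sup>2) * sqrt (\<Sum>\<^sub>\<infinity>x\<in>A. (g x)\<^sup>2)" .
  qed
qed

lemma
  fixes k :: "'a \<Rightarrow> 'a \<Rightarrow> real" and h :: "'a \<Rightarrow> real" and r :: "'a \<Rightarrow> 'b::banach"
  assumes h_ge: "\<And>b. b \<in> A \<Longrightarrow> 0 \<le> h b" and "0 \<le> \<Lambda>"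
    and k_le: "\<And>b. b \<in> A \<Longrightarrow> a \<noteq> b \<Longrightarrow> \<bar>k a b\<bar> \<le> \<Lambda> * h a * h b"
    and hr_summable: "(\<lambda>b. h b * norm (r b)) summable_on A" and "a \<in> A"
  shows summable_on_kernel_row: "(\<lambda>b. k a b *\<^sub>R r b) summable_on (A - {a})"
    and norm_infsum_kernel_row_le:
      "norm (\<Sum>\<^sub>\<infinity>b\<in>A - {a}. k a b *\<^sub>R r b) \<le> \<Lambda> * h a * (\<Sum>\<^sub>\<infinity>b\<in>A. h b * norm (r b))"
proof -
  have hr_summable': "(\<lambda>b. h b * norm (r b)) summable_on (A - {a})"
    by (rule summable_on_subset_banach[OF hr_summable]) auto
  have term_le: "norm (k a b *\<^sub>R r b) \<le> \<Lambda> * h a * (h b * norm (r b))" if "b \<in> A - {a}" for b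
    using mult_right_mono[OF k_le norm_ge_zero, of b "r b"] that by (auto simp: mult.assoc)
  have norm_summable: "(\<lambda>b. norm (k a b *\<^sub>R r b)) summable_on (A - {a})"
    by (rule summable_on_comparison_test[OF summable_on_cmult_right[OF hr_summable']])
      (use term_le in auto)
  then show "(\<lambda>b. k a b *\<^sub>R r b) summable_on (A - {a})"
    by (rule abs_summable_summable)
  have "norm (\<Sum>\<^sub>\<infinity>b\<in>A - {a}. k a b *\<^sub>R r b) \<le> (\<Sum>\<^sub>\<infinity>b\<in>A - {a}. norm (k a b *\<^sub>R r b))"
    by (rule norm_infsum_bound[OF norm_summable])
  also have "\<dots> \<le> (\<Sum>\<^sub>\<infinity>b\<in>A - {a}. \<Lambda> * h a * (h b * norm (r b)))"
    by (rule infsum_mono[OF norm_summable summable_on_cmult_right[OF hr_summable'] term_le])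
  also have "\<dots> = \<Lambda> * h a * (\<Sum>\<^sub>\<infinity>b\<in>A - {a}. h b * norm (r b))"
    by (rule infsum_cmult_right[OF hr_summable'])
  also have "\<dots> \<le> \<Lambda> * h a * (\<Sum>\<^sub>\<infinity>b\<in>A. h b * norm (r b))"
    using \<open>0 \<le> \<Lambda>\<close> h_ge[OF \<open>a \<in> A\<close>] h_ge
    by (intro mult_left_mono infsum_mono2[OF hr_summable' hr_summable]) auto
  finally show "norm (\<Sum>\<^sub>\<infinity>b\<in>A - {a}. k a b *\<^sub>R r b) \<le> \<Lambda> * h a * (\<Sum>\<^sub>\<infinity>b\<in>A. h b * norm (r b))" .
qed

lemma
  fixes D :: "real \<Rightarrow> complex \<times> complex" and h :: "real \<Rightarrow> real"
  assumes h_l2: "(\<lambda>a. (h a)\<^sup>2) summable_on Zp" and "0 \<le> C"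
    and D_le: "\<And>a. a \<in> Zp \<Longrightarrow> norm (D a) \<le> C * h a"
  shows l2Zp_if_pointwise_le: "l2Zp D"
    and l2norm_le_if_pointwise_le: "l2norm D \<le> C * sqrt (\<Sum>\<^sub>\<infinity>a\<in>Zp. (h a)\<^sup>2)"
proof -
  have D2_le: "(norm (D a))\<^sup>2 \<le> C\<^sup>2 * (h a)\<^sup>2" if "a \<in> Zp" for a
    using power_mono[OF D_le[OF that] norm_ge_zero, of 2] by (simp add: power_mult_distrib)
  have majorant_summable: "(\<lambda>a. C\<^sup>2 * (h a)\<^sup>2) summable_on Zp"
    by (rule summable_on_cmult_right[OF h_l2])
  have D_l2: "(\<lambda>a. (norm (D a))\<^sup>2) summable_on Zp"
    by (rule summable_on_comparison_test[OF majorant_summable]) (use D2_le in auto)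
  then show "l2Zp D"
    by (simp add: l2Zp_def)
  have "(\<Sum>\<^sub>\<infinity>a\<in>Zp. (norm (D a))\<^sup>2) \<le> (\<Sum>\<^sub>\<infinity>a\<in>Zp. C\<^sup>2 * (h a)\<^sup>2)"
    by (rule infsum_mono[OF D_l2 majorant_summable D2_le])
  also have "\<dots> = C\<^sup>2 * (\<Sum>\<^sub>\<infinity>a\<in>Zp. (h a)\<^sup>2)"
    by (rule infsum_cmult_right[OF h_l2])
  finally have "l2norm D \<le> sqrt (C\<^sup>2 * (\<Sum>\<^sub>\<infinity>a\<in>Zp. (h a)\<^sup>2))"
    unfolding l2norm_def by (rule real_sqrt_le_mono)
  then show "l2norm D \<le> C * sqrt (\<Sum>\<^sub>\<infinity>a\<in>Zp. (h a)\<^sup>2)"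
    using \<open>0 \<le> C\<close> by (simp add: real_sqrt_mult)
qed

lemma kernel_operator_l2_bound:
  fixes k :: "real \<Rightarrow> real \<Rightarrow> real" and h :: "real \<Rightarrow> real" and r :: "real \<Rightarrow> complex \<times> complex"
  assumes h_ge: "\<And>b. b \<in> Zp \<Longrightarrow> 0 \<le> h b" and h_l2: "(\<lambda>b. (h b)\<^sup>2) summable_on Zp"
    and "0 \<le> \<Lambda>"
    and k_le: "\<And>a b. a \<in> Zp \<Longrightarrow> b \<in> Zp \<Longrightarrow> a \<noteq> b \<Longrightarrow> \<bar>k a b\<bar> \<le> \<Lambda> * h a * h b"
    and r: "l2Zp r"
  defines "D \<equiv> \<lambda>a. \<Sum>\<^sub>\<infinity>b\<in>Zp - {a}. k a b *\<^sub>R r b"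
  shows "(\<forall>a\<in>Zp. (\<lambda>b. k a b *\<^sub>R r b) summable_on (Zp - {a}))
     \<and> l2Zp D \<and> l2norm D \<le> \<Lambda> * (\<Sum>\<^sub>\<infinity>b\<in>Zp. (h b)\<^sup>2) * l2norm r"
proof -
  define H where "H = (\<Sum>\<^sub>\<infinity>b\<in>Zp. (h b)\<^sup>2)"
  define S where "S = (\<Sum>\<^sub>\<infinity>b\<in>Zp. h b * norm (r b))"
  have r_l2: "(\<lambda>b. (norm (r b))\<^sup>2) summable_on Zp"
    using r by (simp add: l2Zp_def)
  have hr_summable: "(\<lambda>b. h b * norm (r b)) summable_on Zp"
    by (rule summable_on_mult_of_square_summable[OF h_ge norm_ge_zero h_l2 r_l2])
  have S_le: "S \<le> sqrt H * l2norm r"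
    unfolding S_def H_def l2norm_def
    by (rule infsum_mult_le_sqrt[OF h_ge norm_ge_zero h_l2 r_l2])
  have "0 \<le> S" "0 \<le> H"
    unfolding S_def H_def using h_ge by (auto intro: infsum_nonneg)
  have D_le: "norm (D a) \<le> (\<Lambda> * S) * h a" if "a \<in> Zp" for a
    using norm_infsum_kernel_row_le[where k = k and a = a, OF h_ge \<open>0 \<le> \<Lambda>\<close> k_le[OF that] hr_summable that]
    by (simp add: D_def S_def mult_ac)
  have "l2norm D \<le> \<Lambda> * S * sqrt H"
    unfolding H_def using l2norm_le_if_pointwise_le[OF h_l2 _ D_le] \<open>0 \<le> \<Lambda>\<close> \<open>0 \<le> S\<close> by simp
  also have "\<dots> \<le> \<Lambda> * (sqrt H * l2norm r) * sqrt H"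
    using \<open>0 \<le> \<Lambda>\<close> \<open>0 \<le> H\<close> S_le by (intro mult_right_mono mult_left_mono) auto
  also have "\<dots> = \<Lambda> * H * l2norm r"
    using \<open>0 \<le> H\<close> by (simp add: mult_ac)
  finally have "l2norm D \<le> \<Lambda> * H * l2norm r" .
  moreover have "(\<lambda>b. k a b *\<^sub>R r b) summable_on (Zp - {a})" if "a \<in> Zp" for a
    by (rule summable_on_kernel_row[where k = k and a = a, OF h_ge \<open>0 \<le> \<Lambda>\<close> k_le[OF that] hr_summable that])
  moreover have "l2Zp D"
    using l2Zp_if_pointwise_le[OF h_l2 _ D_le] \<open>0 \<le> \<Lambda>\<close> \<open>0 \<le> S\<close> by simp
  ultimately show ?thesis
    by (simp add: H_def)
qed

section \<open>Bessel functions of small argument\<close>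

lemma has_sum_power_int_pos:
  fixes x :: real
  assumes "\<bar>x\<bar> < 1"
  shows "((\<lambda>m::int. x ^ nat m) has_sum (x / (1 - x))) {0<..}"
proof -
  have "((\<lambda>n. x ^ n) has_sum (x / (1 - x))) {1..}"
    using has_sum_geometric_from_1[of x] assms by simp
  also have "?this \<longleftrightarrow> ?thesis"
    by (rule has_sum_reindex_bij_witness[of _ nat int]) auto
  finally show ?thesis .
qed

lemma has_sum_power_abs_int:
  fixes x :: real
  assumes "\<bar>x\<bar> < 1"
  shows "((\<lambda>m::int. x ^ nat \<bar>m\<bar>) has_sum ((1 + x) / (1 - x))) UNIV"
proof -
  have pos: "((\<lambda>m::int. x ^ nat \<bar>m\<bar>) has_sum (x / (1 - x))) {0<..}"
    using has_sum_power_int_pos[OF assms] by (rule has_sum_cong[THEN iffD1, rotated]) simp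
  have "((\<lambda>m::int. x ^ nat \<bar>m\<bar>) has_sum (x / (1 - x))) {..<0}"
    using pos by (subst has_sum_reindex_bij_witness[of _ uminus uminus "{0<..}"]) auto
  then have "((\<lambda>m::int. x ^ nat \<bar>m\<bar>) has_sum (x / (1 - x) + x / (1 - x))) ({0<..} \<union> {..<0})"
    using pos by (intro has_sum_Un_disjoint) auto
  then have "((\<lambda>m::int. x ^ nat \<bar>m\<bar>) has_sum (1 + (x / (1 - x) + x / (1 - x)))) (insert 0 ({0<..} \<union> {..<0}))"
    using has_sum_insert[of 0 "{0<..} \<union> {..<0}" "\<lambda>m::int. x ^ nat \<bar>m\<bar>"] by simp
  moreover have "insert 0 ({0<..} \<union> {..<0}) = (UNIV :: int set)" by auto
  moreover have "1 + (x / (1 - x) + x / (1 - x)) = (1 + x) / (1 - x)"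
    using assms by (simp add: divide_simps)
  ultimately show ?thesis by simp
qed

lemma abs_bessel_series_le:
  fixes L :: real
  assumes L: "0 \<le> L" "L < 1"
  shows "\<bar>\<Sum>m. (-1)^m / (fact m * fact (m + p)) * (2*L/2)^(2*m + p)\<bar> \<le> L ^ p / (1 - L\<^sup>2)"
proof -
  let ?t = "\<lambda>m. (-1)^m / (fact m * fact (m + p)) * (2*L/2)^(2*m + p) :: real"
  have geom: "(\<lambda>m. L^p * (L\<^sup>2)^m) sums (L^p * (1 / (1 - L\<^sup>2)))"
    using sums_mult[OF geometric_sums[of "L\<^sup>2"]] L by (simp add: abs_square_less_1)
  have t_le: "norm (?t m) \<le> L^p * (L\<^sup>2)^m" for m
  proof -
    have "(1::real) \<le> fact m * fact (m + p)"
      using mult_mono[OF fact_ge_1 fact_ge_1, of m "m + p"] by simp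
    then have "L^(2*m+p) / (fact m * fact (m + p)) \<le> L^(2*m+p) / 1"
      using L by (intro divide_left_mono) auto
    then have "norm (?t m) \<le> L^(2*m+p)"
      using L by (simp add: abs_mult power_abs)
    also have "\<dots> = L^p * (L\<^sup>2)^m"
      by (simp add: power_add power_mult[symmetric] mult.commute)
    finally show ?thesis .
  qed
  have summable_norm_t: "summable (\<lambda>m. norm (?t m))"
    using summable_comparison_test'[OF sums_summable[OF geom], of 0 "\<lambda>m. norm (?t m)"] t_le
    by simp
  have "\<bar>suminf ?t\<bar> \<le> (\<Sum>m. norm (?t m))"
    using summable_norm[OF summable_norm_t] by simp
  also have "\<dots> \<le> (\<Sum>m. L^p * (L\<^sup>2)^m)"
    using suminf_le[OF t_le summable_norm_t sums_summable[OF geom]] .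
  finally have "\<bar>suminf ?t\<bar> \<le> (\<Sum>m. L^p * (L\<^sup>2)^m)" .
  then show ?thesis
    using sums_unique[OF geom] by simp
qed

lemma abs_besselJ_int_le:
  assumes "0 \<le> L" "L < 1"
  shows "\<bar>besselJ_int n (2*L)\<bar> \<le> L ^ nat \<bar>n\<bar> / (1 - L\<^sup>2)"
  using abs_bessel_series_le[OF assms, of "nat \<bar>n\<bar>"]
  by (cases "n \<ge> 0") (simp_all add: besselJ_int_def abs_mult)

lemma Kbe_eq_infsum_besselJ_int:
  "Kbe L (of_int k + 1/2) = (\<Sum>\<^sub>\<infinity>m\<in>{k<..}. (besselJ_int m (2*L))\<^sup>2)"
  unfolding Kbe_def BesselJ_def
proof (rule infsum_reindex_bij_witness[of _ "\<lambda>m. of_int m - of_int k - 1/2" "\<lambda>l. \<lfloor>of_int k + 1/2 + l\<rfloor>"])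
  fix l assume "l \<in> Zp_pos"
  then obtain n :: nat where "l = real n + 1/2" unfolding Zp_pos_eq by blast
  then have "of_int k + 1/2 + l = of_int (k + int n + 1)" by simp
  then show "of_int \<lfloor>of_int k + 1/2 + l\<rfloor> - of_int k - 1/2 = l"
    and "\<lfloor>of_int k + 1/2 + l\<rfloor> \<in> {k<..}"
    using \<open>l = real n + 1/2\<close> by simp_all
next
  fix m assume "m \<in> {k<..}"
  then have "of_int m - of_int k - 1/2 = real (nat (m - k - 1)) + (1/2::real)" by simp
  then show "of_int m - of_int k - 1/2 \<in> Zp_pos" unfolding Zp_pos_eq by (metis rangeI)
qed simp_all

lemma Kbe_le_infsum:
  assumes L: "0 \<le> L" "L < 1"
  shows "Kbe L (of_int k + 1/2) \<le> (\<Sum>\<^sub>\<infinity>m\<in>{k<..}. (L\<^sup>2) ^ nat \<bar>m\<bar>) / (1 - L\<^sup>2)\<^sup>2"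
proof -
  define G where "G m = (L\<^sup>2) ^ nat \<bar>m\<bar> * inverse ((1 - L\<^sup>2)\<^sup>2)" for m :: int
  have "(\<lambda>m::int. (L\<^sup>2) ^ nat \<bar>m\<bar>) summable_on UNIV"
    using has_sum_power_abs_int[of "L\<^sup>2"] L by (auto simp: abs_square_less_1 summable_on_def)
  then have summable: "(\<lambda>m::int. (L\<^sup>2) ^ nat \<bar>m\<bar>) summable_on {k<..}"
    by (rule summable_on_subset_banach) simp
  then have G_summable: "G summable_on {k<..}"
    unfolding G_def by (rule summable_on_cmult_left)
  have J_le: "(besselJ_int m (2*L))\<^sup>2 \<le> G m" for m
  proof -
    have "(besselJ_int m (2*L))\<^sup>2 \<le> (L ^ nat \<bar>m\<bar> / (1 - L\<^sup>2))\<^sup>2"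
      using power_mono[OF abs_besselJ_int_le[OF L] abs_ge_zero, of m 2] by simp
    then show ?thesis
      by (simp add: G_def power_divide field_simps flip: power_mult)
  qed
  have "Kbe L (of_int k + 1/2) \<le> infsum G {k<..}"
    unfolding Kbe_eq_infsum_besselJ_int
    by (rule infsum_mono[OF summable_on_comparison_test[OF G_summable] G_summable])
      (use J_le in auto)
  also have "\<dots> = (\<Sum>\<^sub>\<infinity>m\<in>{k<..}. (L\<^sup>2) ^ nat \<bar>m\<bar>) / (1 - L\<^sup>2)\<^sup>2"
    unfolding G_def divide_inverse by (rule infsum_cmult_left) (rule summable)
  finally show ?thesis .
qed

lemma Kbe_le:
  assumes L: "0 \<le> L" "L < 1"
  shows "Kbe L (of_int k + 1/2) \<le> (1 + L\<^sup>2) / (1 - L\<^sup>2)^3"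
proof -
  have sums: "((\<lambda>m::int. (L\<^sup>2) ^ nat \<bar>m\<bar>) has_sum ((1 + L\<^sup>2) / (1 - L\<^sup>2))) UNIV"
    using has_sum_power_abs_int[of "L\<^sup>2"] L by (simp add: abs_square_less_1)
  then have summable: "(\<lambda>m::int. (L\<^sup>2) ^ nat \<bar>m\<bar>) summable_on UNIV"
    by (simp add: has_sum_iff)
  have "Kbe L (of_int k + 1/2) \<le> (\<Sum>\<^sub>\<infinity>m\<in>{k<..}. (L\<^sup>2) ^ nat \<bar>m\<bar>) / (1 - L\<^sup>2)\<^sup>2"
    by (rule Kbe_le_infsum[OF L])
  also have "\<dots> \<le> (\<Sum>\<^sub>\<infinity>m\<in>UNIV. (L\<^sup>2) ^ nat \<bar>m\<bar>) / (1 - L\<^sup>2)\<^sup>2"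
    by (rule divide_right_mono, rule infsum_mono2[OF summable_on_subset_banach[OF summable] summable])
      auto
  also have "\<dots> = ((1 + L\<^sup>2) / (1 - L\<^sup>2)) / (1 - L\<^sup>2)\<^sup>2"
    using sums by (simp add: has_sum_iff)
  also have "\<dots> = (1 + L\<^sup>2) / (1 - L\<^sup>2)^3"
    by (simp add: power_Suc2 eval_nat_numeral)
  finally show ?thesis .
qed

lemma Kbe_le_pos:
  assumes L: "0 \<le> L" "L < 1" and "0 \<le> k"
  shows "Kbe L (of_int k + 1/2) \<le> L\<^sup>2 / (1 - L\<^sup>2)^3"
proof -
  have sums: "((\<lambda>m::int. (L\<^sup>2) ^ nat \<bar>m\<bar>) has_sum (L\<^sup>2 / (1 - L\<^sup>2))) {0<..}"
    using has_sum_power_int_pos[of "L\<^sup>2"] L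
    by (subst has_sum_cong[where g = "\<lambda>m. (L\<^sup>2) ^ nat m"]) (auto simp: abs_square_less_1)
  then have summable: "(\<lambda>m::int. (L\<^sup>2) ^ nat \<bar>m\<bar>) summable_on {0<..}"
    by (simp add: has_sum_iff)
  have "Kbe L (of_int k + 1/2) \<le> (\<Sum>\<^sub>\<infinity>m\<in>{k<..}. (L\<^sup>2) ^ nat \<bar>m\<bar>) / (1 - L\<^sup>2)\<^sup>2"
    by (rule Kbe_le_infsum[OF L])
  also have "\<dots> \<le> (\<Sum>\<^sub>\<infinity>m\<in>{0<..}. (L\<^sup>2) ^ nat \<bar>m\<bar>) / (1 - L\<^sup>2)\<^sup>2"
    by (rule divide_right_mono, rule infsum_mono2[OF summable_on_subset_banach[OF summable] summable])
      (use \<open>0 \<le> k\<close> in auto)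
  also have "\<dots> = (L\<^sup>2 / (1 - L\<^sup>2)) / (1 - L\<^sup>2)\<^sup>2"
    using sums by (simp add: has_sum_iff)
  also have "\<dots> = L\<^sup>2 / (1 - L\<^sup>2)^3"
    by (simp add: power_Suc2 eval_nat_numeral)
  finally show ?thesis .
qed

definition decay_weight :: "real \<Rightarrow> real" where
  "decay_weight b = (1/2) ^ nat \<lfloor>\<bar>b\<bar>\<rfloor>"

lemma decay_weight_nonneg: "0 \<le> decay_weight b"
  by (simp add: decay_weight_def)

lemma decay_weight_square_summable: "(\<lambda>b. (decay_weight b)\<^sup>2) summable_on Zp"
proof -
  have geom: "(\<lambda>k::int. 4 * (1/4::real) ^ nat \<bar>k\<bar>) summable_on UNIV"
    using has_sum_power_abs_int[of "1/4"] by (intro summable_on_cmult_right) (auto simp: summable_on_def)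
  have weight_le: "decay_weight (of_int k + 1/2) \<le> 2 * (1/2) ^ nat \<bar>k\<bar>" for k :: int
  proof -
    have "nat \<bar>k\<bar> \<le> Suc (nat \<lfloor>\<bar>of_int k + 1/2 :: real\<bar>\<rfloor>)"
      by linarith
    then have "(1/2::real) ^ Suc (nat \<lfloor>\<bar>of_int k + 1/2 :: real\<bar>\<rfloor>) \<le> (1/2) ^ nat \<bar>k\<bar>"
      by (rule power_decreasing) auto
    then show ?thesis
      by (simp add: decay_weight_def)
  qed
  have "(decay_weight (of_int k + 1/2))\<^sup>2 \<le> 4 * (1/4::real) ^ nat \<bar>k\<bar>" for k :: int
    using power_mono[OF weight_le decay_weight_nonneg, of k 2]
    by (simp add: power_mult_distrib) (simp add: power2_eq_square flip: power_mult_distrib)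
  then have "(\<lambda>k::int. (decay_weight (of_int k + 1/2))\<^sup>2) summable_on UNIV"
    by (intro summable_on_comparison_test[OF geom]) auto
  moreover have "inj (\<lambda>k::int. of_int k + 1/2 :: real)"
    by (auto simp: inj_on_def)
  moreover have "Zp = range (\<lambda>k::int. of_int k + 1/2)"
    unfolding Zp_def by auto
  ultimately show ?thesis
    using summable_on_reindex[of "\<lambda>k::int. of_int k + 1/2" UNIV "\<lambda>b. (decay_weight b)\<^sup>2"]
    by (simp add: o_def)
qed

lemma infsum_decay_weight_square_pos: "0 < (\<Sum>\<^sub>\<infinity>b\<in>Zp. (decay_weight b)\<^sup>2)"
proof -
  have "1/2 \<in> Zp"
    unfolding Zp_def by (auto intro: exI[of _ 0])
  then have "(decay_weight (1/2))\<^sup>2 \<le> (\<Sum>\<^sub>\<infinity>b\<in>Zp. (decay_weight b)\<^sup>2)"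
    using finite_sum_le_infsum[OF decay_weight_square_summable, of "{1/2}"] by simp
  then show ?thesis
    by (simp add: decay_weight_def)
qed

lemma abs_BesselJ_le_decay_weight:
  assumes L: "0 \<le> L" "L \<le> 1/2" and "b \<in> Zp"
  shows "\<bar>BesselJ (b - 1/2) (2*L)\<bar> \<le> 4/3 * decay_weight b"
    and "\<bar>BesselJ (b + 1/2) (2*L)\<bar> \<le> 4/3 * decay_weight b"
proof -
  obtain k :: int where k: "b = of_int k + 1/2"
    using \<open>b \<in> Zp\<close> unfolding Zp_def by auto
  have besselJ_le: "\<bar>besselJ_int m (2*L)\<bar> \<le> 4/3 * decay_weight b" if "\<bar>b\<bar> < of_int \<bar>m\<bar> + 1" for m
  proof -
    have "\<bar>besselJ_int m (2*L)\<bar> \<le> L ^ nat \<bar>m\<bar> / (1 - L\<^sup>2)"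
      by (rule abs_besselJ_int_le) (use L in auto)
    also have "\<dots> \<le> (1/2) ^ nat \<bar>m\<bar> / (3/4)"
    proof (rule frac_le)
      show "L ^ nat \<bar>m\<bar> \<le> (1/2) ^ nat \<bar>m\<bar>"
        by (rule power_mono) (use L in auto)
      have "L\<^sup>2 \<le> (1/2)\<^sup>2"
        by (rule power_mono) (use L in auto)
      then show "3/4 \<le> 1 - L\<^sup>2"
        by (simp add: power2_eq_square)
    qed auto
    also have "\<dots> \<le> (1/2) ^ nat \<lfloor>\<bar>b\<bar>\<rfloor> / (3/4)"
      using that by (intro divide_right_mono power_decreasing) linarith+
    finally show ?thesis
      by (simp add: decay_weight_def)
  qed
  have "b - 1/2 = of_int k" "b + 1/2 = of_int (k + 1)"
    unfolding k by simp_all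
  then show "\<bar>BesselJ (b - 1/2) (2*L)\<bar> \<le> 4/3 * decay_weight b"
    and "\<bar>BesselJ (b + 1/2) (2*L)\<bar> \<le> 4/3 * decay_weight b"
    unfolding BesselJ_def using besselJ_le[of k] besselJ_le[of "k + 1"] k by (simp_all only: floor_of_int)
qed

section \<open>The denominators 1 - M_s\<close>

lemma ex_bound_lt_1_if_prodinf_pos:
  fixes f :: "nat \<Rightarrow> real"
  assumes summable: "summable f" and f_ge: "\<And>i. 0 \<le> f i" and f_le: "\<And>i. f i \<le> 1"
    and prod_pos: "(\<Prod>i. 1 - f i) > 0"
  shows "\<exists>q<1. \<forall>i. f i \<le> q"
proof -
  have "convergent_prod (\<lambda>i. 1 - f i)"
    using summable f_ge
    by (intro abs_convergent_prod_imp_convergent_prod summable_imp_abs_convergent_prod) simp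
  then have has_prod: "(\<lambda>i. 1 - f i) has_prod (\<Prod>i. 1 - f i)"
    by (rule convergent_prod_has_prod)
  have f_lt: "f i < 1" for i
    using has_prod_zeroI[OF has_prod, of i] prod_pos f_le[of i] by force
  have "f \<longlonglongrightarrow> 0"
    using summable by (rule summable_LIMSEQ_zero)
  then obtain N where N: "\<And>i. i \<ge> N \<Longrightarrow> f i < 1/2"
    using order_tendstoD(2)[of f 0 sequentially "1/2"] by (auto simp: eventually_sequentially)
  define q where "q = max (1/2) (Max (f ` {..N}))"
  have "f i \<le> q" for i
  proof (cases "i \<le> N")
    case True
    then have "f i \<le> Max (f ` {..N})" by (intro Max_ge) auto
    then show ?thesis by (simp add: q_def)
  next
    case False
    then show ?thesis using N[of i] by (simp add: q_def)
  qed
  moreover have "q < 1"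
    using f_lt by (simp add: q_def)
  ultimately show ?thesis by blast
qed

lemma summable_sigma_reflected:
  fixes \<sigma> :: "real \<Rightarrow> real"
  assumes \<sigma>_nonneg: "\<forall>l\<in>Zp. 0 \<le> \<sigma> l" and \<sigma>_summable: "\<sigma> summable_on {l\<in>Zp. l < 0}"
    and "s \<in> Zp"
  shows "summable (\<lambda>i. \<sigma> (- real (Suc i) - s))"
proof -
  define i0 where "i0 = nat \<lceil>- s\<rceil>"
  define \<psi> where "\<psi> j = - real (Suc (j + i0)) - s" for j
  have in_Zp: "\<psi> j \<in> Zp" for j
    unfolding \<psi>_def using Zp_minus_real[OF \<open>s \<in> Zp\<close>] .
  moreover have "\<psi> j < 0" for j
    unfolding \<psi>_def i0_def by linarith
  ultimately have "\<sigma> summable_on range \<psi>"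
    by (intro summable_on_subset_banach[OF \<sigma>_summable]) auto
  moreover have "inj \<psi>"
    by (auto simp: inj_on_def \<psi>_def)
  ultimately have "(\<lambda>j. \<sigma> (\<psi> j)) summable_on UNIV"
    using summable_on_reindex[of \<psi> UNIV \<sigma>] by (simp add: o_def)
  moreover have "0 \<le> \<sigma> (\<psi> j)" for j
    using \<sigma>_nonneg in_Zp by blast
  ultimately have "summable (\<lambda>j. \<sigma> (\<psi> j))"
    by (simp add: summable_on_UNIV_nonneg_real_iff)
  then show ?thesis
    unfolding \<psi>_def by (rule summable_iff_shift[where f = "\<lambda>i. \<sigma> (- real (Suc i) - s)", THEN iffD1])
qed

lemma ex_sigma_reflected_bound_lt_1:
  fixes \<sigma> :: "real \<Rightarrow> real"
  assumes \<sigma>_range: "\<forall>l\<in>Zp. 0 \<le> \<sigma> l \<and> \<sigma> l \<le> 1" and \<sigma>_summable: "\<sigma> summable_on {l\<in>Zp. l < 0}"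
    and "s \<in> Zp" and prod_pos: "(\<Prod>i. 1 - \<sigma> (- real (Suc i) - s)) > 0"
  obtains q where "0 \<le> q" "q < 1" "\<And>i. \<sigma> (- real (Suc i) - s) \<le> q"
proof -
  have \<sigma>_reflected: "0 \<le> \<sigma> (- real (Suc i) - s) \<and> \<sigma> (- real (Suc i) - s) \<le> 1" for i
    using \<sigma>_range Zp_minus_real[OF \<open>s \<in> Zp\<close>] by blast
  then obtain q where "q < 1" "\<And>i. \<sigma> (- real (Suc i) - s) \<le> q"
    using ex_bound_lt_1_if_prodinf_pos[OF summable_sigma_reflected[OF _ \<sigma>_summable \<open>s \<in> Zp\<close>] _ _ prod_pos]
      \<sigma>_range by blast
  moreover have "0 \<le> q"
    using \<sigma>_reflected[of 0] \<open>\<And>i. \<sigma> (- real (Suc i) - s) \<le> q\<close>[of 0] by linarith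
  ultimately show ?thesis
    using that by blast
qed

lemma Ms_le_max:
  fixes \<sigma> :: "real \<Rightarrow> real"
  assumes \<sigma>_range: "\<forall>l\<in>Zp. 0 \<le> \<sigma> l \<and> \<sigma> l \<le> 1" and "s \<in> Zp"
    and \<sigma>_le: "\<And>i. \<sigma> (- real (Suc i) - s) \<le> q"
    and L: "0 \<le> L" "L < 1" and "b \<in> Zp"
  shows "Ms \<sigma> s L b \<le> max (L\<^sup>2 / (1 - L\<^sup>2)^3) (q * ((1 + L\<^sup>2) / (1 - L\<^sup>2)^3))"
proof -
  obtain k :: int where k: "b = of_int k + 1/2"
    using \<open>b \<in> Zp\<close> unfolding Zp_def by auto
  have \<sigma>_b: "0 \<le> \<sigma> (b - s - 1/2)" "\<sigma> (b - s - 1/2) \<le> 1"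
    using \<sigma>_range Zp_diff_minus_half[OF \<open>b \<in> Zp\<close> \<open>s \<in> Zp\<close>] by auto
  have Kbe_ge: "0 \<le> Kbe L b"
    unfolding Kbe_def by (rule infsum_nonneg) simp
  show ?thesis
  proof (cases "0 \<le> k")
    case True
    have "Ms \<sigma> s L b \<le> 1 * Kbe L b"
      unfolding Ms_def by (rule mult_right_mono) (use \<sigma>_b Kbe_ge in auto)
    also have "\<dots> \<le> L\<^sup>2 / (1 - L\<^sup>2)^3"
      using Kbe_le_pos[OF L True] k by simp
    finally show ?thesis by simp
  next
    case False
    then have "b - s - 1/2 = - real (Suc (nat (- k - 1))) - s"
      unfolding k by simp
    then have "\<sigma> (b - s - 1/2) \<le> q"
      using \<sigma>_le by metis
    then have "Ms \<sigma> s L b \<le> q * ((1 + L\<^sup>2) / (1 - L\<^sup>2)^3)"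
      unfolding Ms_def using Kbe_le[OF L, of k] k \<sigma>_b Kbe_ge by (intro mult_mono) auto
    then show ?thesis by simp
  qed
qed

lemma ex_Lstar_Ms_le:
  fixes \<sigma> :: "real \<Rightarrow> real"
  assumes \<sigma>_range: "\<forall>l\<in>Zp. 0 \<le> \<sigma> l \<and> \<sigma> l \<le> 1" and "s \<in> Zp"
    and \<sigma>_le: "\<And>i. \<sigma> (- real (Suc i) - s) \<le> q" and "0 \<le> q" "q < 1 - \<delta>"
  obtains Lstar where "0 < Lstar" and "\<And>L. 0 \<le> L \<Longrightarrow> L < Lstar \<Longrightarrow> L \<le> 1/2"
    and "\<And>L b. 0 \<le> L \<Longrightarrow> L < Lstar \<Longrightarrow> b \<in> Zp \<Longrightarrow> Ms \<sigma> s L b \<le> 1 - \<delta>"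
proof -
  define M where "M L = max (L\<^sup>2 / (1 - L\<^sup>2)^3) (q * ((1 + L\<^sup>2) / (1 - L\<^sup>2)^3))" for L :: real
  have "(M \<longlongrightarrow> M 0) (nhds 0)"
    unfolding M_def by (intro tendsto_intros filterlim_ident) auto
  moreover have "M 0 < 1 - \<delta>"
    using \<open>0 \<le> q\<close> \<open>q < 1 - \<delta>\<close> by (simp add: M_def)
  ultimately have "\<forall>\<^sub>F L in nhds 0. M L < 1 - \<delta>"
    by (rule order_tendstoD(2))
  moreover have "\<forall>\<^sub>F L in nhds 0. L < (1/2 :: real)"
    by (rule order_tendstoD(2)[OF filterlim_ident]) simp
  ultimately have "\<forall>\<^sub>F L in nhds 0. M L < 1 - \<delta> \<and> L < 1/2"
    by (rule eventually_conj)
  then obtain Lstar :: real where "Lstar > 0"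
    and small: "\<And>L. \<bar>L\<bar> < Lstar \<Longrightarrow> M L < 1 - \<delta> \<and> L < 1/2"
    unfolding eventually_nhds_metric dist_real_def by auto
  moreover have "L \<le> 1/2" if "0 \<le> L" "L < Lstar" for L
    using small[of L] that by auto
  moreover have "Ms \<sigma> s L b \<le> 1 - \<delta>" if "0 \<le> L" "L < Lstar" "b \<in> Zp" for L b
    using small[of L] Ms_le_max[OF \<sigma>_range \<open>s \<in> Zp\<close> \<sigma>_le \<open>0 \<le> L\<close> _ \<open>b \<in> Zp\<close>] that
    unfolding M_def by auto
  ultimately show ?thesis
    using that by blast
qed

section \<open>The kernel of D\<close>

lemma
  fixes \<sigma> :: "real \<Rightarrow> real"
  assumes \<sigma>_range: "\<forall>l\<in>Zp. 0 \<le> \<sigma> l \<and> \<sigma> l \<le> 1" and "s \<in> Zp"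
    and L: "0 \<le> L" "L \<le> 1/2" and "a \<in> Zp"
  shows abs_fhat1_le: "\<bar>fhat1 \<sigma> s L a\<bar> \<le> 4/3 * decay_weight a"
    and abs_fhat2_le: "\<bar>fhat2 \<sigma> s L a\<bar> \<le> L * (4/3 * decay_weight a)"
proof -
  have \<sigma>_a: "0 \<le> \<sigma> (a - s - 1/2)" "\<sigma> (a - s - 1/2) \<le> 1"
    using \<sigma>_range Zp_diff_minus_half[OF \<open>a \<in> Zp\<close> \<open>s \<in> Zp\<close>] by auto
  note J = abs_BesselJ_le_decay_weight[OF L \<open>a \<in> Zp\<close>]
  show "\<bar>fhat1 \<sigma> s L a\<bar> \<le> 4/3 * decay_weight a"
    unfolding fhat1_def abs_mult using mult_mono[OF \<sigma>_a(2) J(1)] \<sigma>_a by simp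
  show "\<bar>fhat2 \<sigma> s L a\<bar> \<le> L * (4/3 * decay_weight a)"
    unfolding fhat2_def abs_mult using mult_mono[OF \<sigma>_a(2) mult_left_mono[OF J(2) L(1)]] \<sigma>_a L
    by simp
qed

lemma
  fixes \<sigma> :: "real \<Rightarrow> real"
  assumes L: "0 \<le> L" "L \<le> 1/2" and "b \<in> Zp" and "0 < \<delta>" and Ms_le: "Ms \<sigma> s L b \<le> 1 - \<delta>"
  shows abs_ghat1_le: "\<bar>ghat1 \<sigma> s L b\<bar> \<le> L * (4/3 * decay_weight b) / \<delta>"
    and abs_ghat2_le: "\<bar>ghat2 \<sigma> s L b\<bar> \<le> 4/3 * decay_weight b / \<delta>"
proof -
  have denom: "\<delta> \<le> 1 - Ms \<sigma> s L b"
    using Ms_le by simp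
  note J = abs_BesselJ_le_decay_weight[OF L \<open>b \<in> Zp\<close>]
  have "\<bar>ghat1 \<sigma> s L b\<bar> = L * \<bar>BesselJ (b + 1/2) (2*L)\<bar> / (1 - Ms \<sigma> s L b)"
    unfolding ghat1_def using denom \<open>0 < \<delta>\<close> L by (simp add: abs_mult)
  also have "\<dots> \<le> L * (4/3 * decay_weight b) / \<delta>"
    using J(2) L denom \<open>0 < \<delta>\<close> decay_weight_nonneg[of b]
    by (intro frac_le mult_left_mono) auto
  finally show "\<bar>ghat1 \<sigma> s L b\<bar> \<le> L * (4/3 * decay_weight b) / \<delta>" .
  have "\<bar>ghat2 \<sigma> s L b\<bar> = \<bar>BesselJ (b - 1/2) (2*L)\<bar> / (1 - Ms \<sigma> s L b)"
    unfolding ghat2_def using denom \<open>0 < \<delta>\<close> by simp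
  also have "\<dots> \<le> 4/3 * decay_weight b / \<delta>"
    using J(1) denom \<open>0 < \<delta>\<close> decay_weight_nonneg[of b] by (intro frac_le) auto
  finally show "\<bar>ghat2 \<sigma> s L b\<bar> \<le> 4/3 * decay_weight b / \<delta>" .
qed

lemma abs_Dker_le:
  fixes \<sigma> :: "real \<Rightarrow> real"
  assumes \<sigma>_range: "\<forall>l\<in>Zp. 0 \<le> \<sigma> l \<and> \<sigma> l \<le> 1" and "s \<in> Zp"
    and L: "0 \<le> L" "L \<le> 1/2" and "0 < \<delta>" and Ms_le: "Ms \<sigma> s L b \<le> 1 - \<delta>"
    and "a \<in> Zp" "b \<in> Zp" "a \<noteq> b"
  shows "\<bar>Dker \<sigma> s L a b\<bar> \<le> 4 * L / \<delta> * decay_weight a * decay_weight b"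
proof -
  let ?wa = "decay_weight a" and ?wb = "decay_weight b"
  let ?num = "ghat1 \<sigma> s L b * fhat1 \<sigma> s L a + ghat2 \<sigma> s L b * fhat2 \<sigma> s L a"
  have "\<bar>ghat1 \<sigma> s L b * fhat1 \<sigma> s L a\<bar> \<le> L * (4/3 * ?wb) / \<delta> * (4/3 * ?wa)"
    unfolding abs_mult using L \<open>0 < \<delta>\<close> decay_weight_nonneg[of b]
    by (intro mult_mono abs_ghat1_le[OF L \<open>b \<in> Zp\<close> \<open>0 < \<delta>\<close> Ms_le]
        abs_fhat1_le[OF \<sigma>_range \<open>s \<in> Zp\<close> L \<open>a \<in> Zp\<close>]) auto
  moreover have "\<bar>ghat2 \<sigma> s L b * fhat2 \<sigma> s L a\<bar> \<le> 4/3 * ?wb / \<delta> * (L * (4/3 * ?wa))"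
    unfolding abs_mult using \<open>0 < \<delta>\<close> decay_weight_nonneg[of b]
    by (intro mult_mono abs_ghat2_le[OF L \<open>b \<in> Zp\<close> \<open>0 < \<delta>\<close> Ms_le]
        abs_fhat2_le[OF \<sigma>_range \<open>s \<in> Zp\<close> L \<open>a \<in> Zp\<close>]) auto
  ultimately have "\<bar>?num\<bar> \<le> 32/9 * L / \<delta> * ?wa * ?wb"
    by (simp add: field_simps)
  also have "\<dots> \<le> 4 * L / \<delta> * ?wa * ?wb"
    using L \<open>0 < \<delta>\<close> decay_weight_nonneg[of a] decay_weight_nonneg[of b]
    by (intro mult_right_mono divide_right_mono) auto
  finally have num_le: "\<bar>?num\<bar> \<le> 4 * L / \<delta> * ?wa * ?wb" .
  have "\<bar>Dker \<sigma> s L a b\<bar> = \<bar>?num\<bar> / \<bar>a - b\<bar>"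
    unfolding Dker_def by (simp add: abs_divide)
  also have "\<dots> \<le> \<bar>?num\<bar> / 1"
    using Zp_abs_diff_ge_1[OF \<open>a \<in> Zp\<close> \<open>b \<in> Zp\<close> \<open>a \<noteq> b\<close>] by (intro divide_left_mono) auto
  finally show ?thesis
    using num_le by simp
qed

lemma Dop_l2_bound:
  fixes \<sigma> :: "real \<Rightarrow> real"
  assumes \<sigma>_range: "\<forall>l\<in>Zp. 0 \<le> \<sigma> l \<and> \<sigma> l \<le> 1" and "s \<in> Zp"
    and L: "0 \<le> L" "L \<le> 1/2" and "0 < \<delta>" and Ms_le: "\<And>b. b \<in> Zp \<Longrightarrow> Ms \<sigma> s L b \<le> 1 - \<delta>"
    and "l2Zp r"
  shows "(\<forall>a\<in>Zp. (\<lambda>b. Dker \<sigma> s L a b *\<^sub>R r b) summable_on (Zp - {a}))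
    \<and> l2Zp (Dop \<sigma> s L r)
    \<and> l2norm (Dop \<sigma> s L r) \<le> 4 * L / \<delta> * (\<Sum>\<^sub>\<infinity>b\<in>Zp. (decay_weight b)\<^sup>2) * l2norm r"
proof -
  have "Dop \<sigma> s L r = (\<lambda>a. \<Sum>\<^sub>\<infinity>b\<in>Zp - {a}. Dker \<sigma> s L a b *\<^sub>R r b)"
    by (intro ext) (rule Dop_def)
  moreover have "0 \<le> 4 * L / \<delta>"
    using L \<open>0 < \<delta>\<close> by simp
  ultimately show ?thesis
    using kernel_operator_l2_bound[OF decay_weight_nonneg decay_weight_square_summable _
        abs_Dker_le[OF \<sigma>_range \<open>s \<in> Zp\<close> L \<open>0 < \<delta>\<close> Ms_le] \<open>l2Zp r\<close>]
    by simp
qed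

theorem proposition5p1:
  fixes \<sigma> :: "real \<Rightarrow> real" and s :: real
  assumes sigma_range: "\<forall>l\<in>Zp. 0 \<le> \<sigma> l \<and> \<sigma> l \<le> 1"
    and sigma_sum: "\<sigma> summable_on {l\<in>Zp. l < 0}"
    and s_Zp: "s \<in> Zp"
    and Q_pos: "(\<Prod>i. 1 - \<sigma> (- real (Suc i) - s)) > 0"
  shows "\<exists>Lstar > 0. \<exists>c > 0. \<forall>L. 0 \<le> L \<and> L < Lstar \<longrightarrow>
           (\<forall>r. l2Zp r \<longrightarrow>
              (\<forall>a\<in>Zp. (\<lambda>b. Dker \<sigma> s L a b *\<^sub>R r b) summable_on (Zp - {a}))
              \<and> l2Zp (Dop \<sigma> s L r)
              \<and> l2norm (Dop \<sigma> s L r) \<le> c * L * l2norm r)"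
proof -
  obtain q where "0 \<le> q" "q < 1" and \<sigma>_le: "\<And>i. \<sigma> (- real (Suc i) - s) \<le> q"
    using ex_sigma_reflected_bound_lt_1[OF sigma_range sigma_sum s_Zp Q_pos] by metis
  define \<delta> where "\<delta> = (1 - q) / 2"
  have "0 < \<delta>" "q < 1 - \<delta>"
    using \<open>q < 1\<close> by (auto simp: \<delta>_def field_simps)
  obtain Lstar where "0 < Lstar" and L_le: "\<And>L. 0 \<le> L \<Longrightarrow> L < Lstar \<Longrightarrow> L \<le> 1/2"
    and Ms_small: "\<And>L b. 0 \<le> L \<Longrightarrow> L < Lstar \<Longrightarrow> b \<in> Zp \<Longrightarrow> Ms \<sigma> s L b \<le> 1 - \<delta>"
    using ex_Lstar_Ms_le[OF sigma_range s_Zp \<sigma>_le \<open>0 \<le> q\<close> \<open>q < 1 - \<delta>\<close>] by metis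
  define c where "c = 4 / \<delta> * (\<Sum>\<^sub>\<infinity>b\<in>Zp. (decay_weight b)\<^sup>2)"
  have "0 < c"
    using \<open>0 < \<delta>\<close> infsum_decay_weight_square_pos by (simp add: c_def)
  moreover have "(\<forall>a\<in>Zp. (\<lambda>b. Dker \<sigma> s L a b *\<^sub>R r b) summable_on (Zp - {a}))
      \<and> l2Zp (Dop \<sigma> s L r) \<and> l2norm (Dop \<sigma> s L r) \<le> c * L * l2norm r"
    if "0 \<le> L" "L < Lstar" "l2Zp r" for L r
    using Dop_l2_bound[OF sigma_range s_Zp \<open>0 \<le> L\<close> L_le[OF that(1,2)] \<open>0 < \<delta>\<close>
        Ms_small[OF that(1,2)] \<open>l2Zp r\<close>]
    by (simp add: c_def mult_ac)
  ultimately show ?thesis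
    using \<open>0 < Lstar\<close> by blast
qed

end
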